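(* Let $Z=\ell_2$ with canonical basis $(e_n)$ and coordinate functionals $(e_n^* )$, let $\theta:\mathbb{R}\to[0,\infty)$ be $\theta(t)=0$ for $t\le0$, $\theta(t)=t^2$ for $t\ge0$, and define $f:Z\to[0,\infty)$ by $$f(x)=\sum_{n=1}^\infty 2^{-n}\,\theta\big(e_n^*(x)-n\big).$$ Then $f$ is continuous and convex and is not constant on any line $\{x+tv:t\in\mathbb{R}\}$ with $v\neq0$, but there is no continuous linear form $\xi:Z\to\mathbb{R}$ such that $f-\xi$ attains a strict minimum, i.e. there are no $\xi\in Z^*$ and $x\in Z$ with $(f-\xi)(y)>(f-\xi)(x)$ for all $y\neq x$. *)

theory Defs
  imports "HOL-Analysis.Analysis"
begin

text \<open>The Hilbert space l2 is modelled as the carrier set of square-summable real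
sequences indexed by nat; index k corresponds to the paper's coordinate e_(k+1)^*.\<close>

definition l2 :: "(nat \<Rightarrow> real) set" where
  "l2 = {x. summable (\<lambda>n. (x n)\<^sup>2)}"

definition l2_norm :: "(nat \<Rightarrow> real) \<Rightarrow> real" where
  "l2_norm x = sqrt (\<Sum>n. (x n)\<^sup>2)"

definition theta :: "real \<Rightarrow> real" where
  "theta t = (if t \<le> 0 then 0 else t\<^sup>2)"

definition fex :: "(nat \<Rightarrow> real) \<Rightarrow> real" where
  "fex x = (\<Sum>k. (1/2) ^ (k+1) * theta (x k - real (k+1)))"

definition l2_continuous :: "((nat \<Rightarrow> real) \<Rightarrow> real) \<Rightarrow> bool" where
  "l2_continuous g \<longleftrightarrow> (\<forall>x\<in>l2. \<forall>e>0. \<exists>d>0. \<forall>y\<in>l2.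
      l2_norm (\<lambda>n. y n - x n) < d \<longrightarrow> \<bar>g y - g x\<bar> < e)"

definition l2_convex :: "((nat \<Rightarrow> real) \<Rightarrow> real) \<Rightarrow> bool" where
  "l2_convex g \<longleftrightarrow> (\<forall>x\<in>l2. \<forall>y\<in>l2. \<forall>u::real. 0 \<le> u \<and> u \<le> 1 \<longrightarrow>
      g (\<lambda>n. u * x n + (1 - u) * y n) \<le> u * g x + (1 - u) * g y)"

definition l2_dual :: "((nat \<Rightarrow> real) \<Rightarrow> real) set" where
  "l2_dual = {\<xi>. (\<forall>x\<in>l2. \<forall>y\<in>l2. \<xi> (\<lambda>n. x n + y n) = \<xi> x + \<xi> y)
      \<and> (\<forall>x\<in>l2. \<forall>c::real. \<xi> (\<lambda>n. c * x n) = c * \<xi> x)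
      \<and> (\<exists>C. \<forall>x\<in>l2. \<bar>\<xi> x\<bar> \<le> C * l2_norm x)}"

end

theory Submission
  imports Defs
begin

text \<open>On a line \<open>x + t v\<close> with \<open>v m \<noteq> 0\<close>
the \<open>m\<close>-th summand alone takes arbitrarily large values, so \<open>fex\<close> is not constant there.
But coordinates of a point of \<open>\<ell>\<^sub>2\<close> tend to zero, so every \<open>x\<close> has a coordinate \<open>k\<close> with
\<open>x k \<le> k\<close>; moving that coordinate by \<open>\<plusminus>1\<close> leaves \<open>fex\<close> unchanged, and a linear form
must decrease in one of the two directions, so \<open>fex - \<xi>\<close> has no strict minimum.\<close>

lemma l2_linear_combination:
  assumes "x \<in> l2" "y \<in> l2"
  shows "(\<lambda>n. a * x n + b * y n) \<in> l2"
proof -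
  have "summable (\<lambda>n. 2 * a\<^sup>2 * (x n)\<^sup>2 + 2 * b\<^sup>2 * (y n)\<^sup>2)"
    using assms by (intro summable_add summable_mult) (auto simp: l2_def)
  moreover have "(a * x n + b * y n)\<^sup>2 \<le> 2 * a\<^sup>2 * (x n)\<^sup>2 + 2 * b\<^sup>2 * (y n)\<^sup>2" for n
    using zero_le_power2[of "a * x n - b * y n"] by (simp add: power2_eq_square algebra_simps)
  ultimately show ?thesis
    unfolding l2_def by (auto intro: summable_comparison_test')
qed

lemma l2_fun_upd:
  assumes "x \<in> l2"
  shows "x(k := a) \<in> l2"
proof -
  have "\<forall>\<^sub>F n in sequentially. ((x(k := a)) n)\<^sup>2 = (x n)\<^sup>2"
    using eventually_gt_at_top[of k] by eventually_elim simp
  then show ?thesis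
    using assms unfolding l2_def by (simp add: summable_cong)
qed

lemma abs_le_l2_norm:
  assumes "x \<in> l2"
  shows "\<bar>x k\<bar> \<le> l2_norm x"
proof -
  have "(x k)\<^sup>2 \<le> (\<Sum>n. (x n)\<^sup>2)"
    using assms sum_le_suminf[of "\<lambda>n. (x n)\<^sup>2" "{k}"] by (simp add: l2_def)
  then show ?thesis
    unfolding l2_norm_def by (metis power2_abs real_le_rsqrt)
qed

lemma l2_tendsto_zero:
  assumes "x \<in> l2"
  shows "x \<longlonglongrightarrow> 0"
proof -
  have "(\<lambda>n. (x n)\<^sup>2) \<longlonglongrightarrow> 0"
    using assms unfolding l2_def by (blast intro: summable_LIMSEQ_zero)
  from tendsto_real_sqrt[OF this] show ?thesis
    by (simp add: tendsto_rabs_zero_iff)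
qed

lemma l2_dual_midpoint:
  assumes "\<xi> \<in> l2_dual" "x \<in> l2" "y \<in> l2" "z \<in> l2"
    and "(\<lambda>n. y n + z n) = (\<lambda>n. 2 * x n)"
  shows "\<xi> y + \<xi> z = 2 * \<xi> x"
proof -
  have "\<xi> y + \<xi> z = \<xi> (\<lambda>n. y n + z n)"
    using assms(1,3,4) by (simp add: l2_dual_def)
  also have "\<dots> = 2 * \<xi> x"
    using assms(1,2,5) by (simp add: l2_dual_def)
  finally show ?thesis .
qed

lemma theta_eq_max_square: "theta t = (max t 0)\<^sup>2"
  by (simp add: theta_def max_def)

lemma theta_nonneg: "0 \<le> theta t"
  by (simp add: theta_def)

lemma theta_diff_le_square:
  assumes "0 \<le> c"
  shows "theta (a - c) \<le> a\<^sup>2"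
  using assms power_mono[of "a - c" a 2] by (simp add: theta_def)

lemma abs_theta_diff_le:
  "\<bar>theta b - theta a\<bar> \<le> \<bar>b - a\<bar> * (max a 0 + max b 0)"
proof -
  have "theta b - theta a = (max b 0 - max a 0) * (max a 0 + max b 0)"
    by (simp add: theta_eq_max_square power2_eq_square algebra_simps)
  then have "\<bar>theta b - theta a\<bar> = \<bar>max b 0 - max a 0\<bar> * (max a 0 + max b 0)"
    by (simp add: abs_mult)
  also have "\<dots> \<le> \<bar>b - a\<bar> * (max a 0 + max b 0)"
    by (intro mult_right_mono) auto
  finally show ?thesis .
qed

lemma theta_convex:
  assumes "0 \<le> u" "u \<le> 1"
  shows "theta (u * a + (1 - u) * b) \<le> u * theta a + (1 - u) * theta b"
proof -
  define p q where "p = max a 0" and "q = max b 0"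
  have "max (u * a + (1 - u) * b) 0 \<le> u * p + (1 - u) * q"
    using assms mult_left_mono[of a p u] mult_left_mono[of b q "1 - u"]
    unfolding p_def q_def by (auto simp: max_def)
  then have "theta (u * a + (1 - u) * b) \<le> (u * p + (1 - u) * q)\<^sup>2"
    unfolding theta_eq_max_square by (intro power_mono) auto
  also have "\<dots> \<le> u * p\<^sup>2 + (1 - u) * q\<^sup>2"
  proof -
    have "u * p\<^sup>2 + (1 - u) * q\<^sup>2 - (u * p + (1 - u) * q)\<^sup>2 = u * (1 - u) * (p - q)\<^sup>2"
      by (simp add: power2_eq_square algebra_simps)
    moreover have "0 \<le> u * (1 - u) * (p - q)\<^sup>2"
      using assms by simp
    ultimately show ?thesis by linarith
  qed
  finally show ?thesis
    unfolding theta_eq_max_square p_def q_def .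
qed

lemma abs_suminf_weighted_diff_le:
  fixes w a b :: "nat \<Rightarrow> real"
  assumes "w sums W" "\<And>k. 0 \<le> w k"
    and "summable (\<lambda>k. w k * a k)" "summable (\<lambda>k. w k * b k)"
    and "\<And>k. \<bar>a k - b k\<bar> \<le> M"
  shows "\<bar>(\<Sum>k. w k * a k) - (\<Sum>k. w k * b k)\<bar> \<le> W * M"
proof -
  have "(\<Sum>k. w k * a k) - (\<Sum>k. w k * b k) = (\<Sum>k. w k * a k - w k * b k)"
    using suminf_diff[OF assms(3,4)] by simp
  also have "norm \<dots> \<le> (\<Sum>k. w k * M)"
  proof (rule norm_suminf_le)
    show "norm (w k * a k - w k * b k) \<le> w k * M" for k
      using assms(2,5)[of k] mult_left_mono[of "\<bar>a k - b k\<bar>" M "w k"]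
      by (simp add: abs_mult right_diff_distrib[symmetric])
    show "summable (\<lambda>k. w k * M)"
      using assms(1) by (intro summable_mult2 sums_summable)
  qed
  also have "\<dots> = W * M"
    using sums_unique[OF sums_mult2[OF assms(1)]] by simp
  finally show ?thesis by simp
qed

lemma fex_summable:
  assumes "x \<in> l2"
  shows "summable (\<lambda>k. (1/2) ^ (k+1) * theta (x k - real (k+1)))"
proof (rule summable_comparison_test)
  show "summable (\<lambda>k. (x k)\<^sup>2)"
    using assms by (simp add: l2_def)
  have "(1/2::real) ^ (k+1) * theta (x k - real (k+1)) \<le> 1 * (x k)\<^sup>2" for k
    by (intro mult_mono power_le_one theta_diff_le_square) (auto simp: theta_nonneg)
  then show "\<exists>N. \<forall>k\<ge>N. norm ((1/2::real) ^ (k+1) * theta (x k - real (k+1))) \<le> (x k)\<^sup>2"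
    by (simp add: theta_nonneg)
qed

lemma fex_term_le:
  assumes "x \<in> l2"
  shows "(1/2) ^ (k+1) * theta (x k - real (k+1)) \<le> fex x"
  unfolding fex_def using sum_le_suminf[OF fex_summable[OF assms], of "{k}"]
  by (simp add: theta_nonneg)

lemma fex_nonneg:
  assumes "x \<in> l2"
  shows "0 \<le> fex x"
  using fex_term_le[OF assms, of 0] theta_nonneg[of "x 0 - 1"] by simp

lemma abs_fex_diff_le:
  assumes x: "x \<in> l2" and y: "y \<in> l2"
  defines "\<delta> \<equiv> l2_norm (\<lambda>n. y n - x n)"
  shows "\<bar>fex y - fex x\<bar> \<le> \<delta> * (2 * l2_norm x + \<delta>)"
proof -
  let ?A = "l2_norm x"
  have "(\<lambda>n. y n - x n) \<in> l2"
    using l2_linear_combination[OF y x, of 1 "-1"] by simp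
  then have diff: "\<bar>y k - x k\<bar> \<le> \<delta>" for k
    using abs_le_l2_norm unfolding \<delta>_def by blast
  have coord: "\<bar>x k\<bar> \<le> ?A" for k
    using abs_le_l2_norm[OF x] .
  have "\<bar>theta (y k - real (k+1)) - theta (x k - real (k+1))\<bar> \<le> \<delta> * (2 * ?A + \<delta>)" for k
  proof -
    have "max (x k - real (k+1)) 0 \<le> ?A" "max (y k - real (k+1)) 0 \<le> ?A + \<delta>"
      using coord[of k] diff[of k] by (simp_all add: abs_le_iff)
    then have "max (x k - real (k+1)) 0 + max (y k - real (k+1)) 0 \<le> 2 * ?A + \<delta>"
      by linarith
    moreover have "0 \<le> \<delta>"
      using diff[of k] by linarith
    ultimately have "\<bar>y k - x k\<bar> * (max (x k - real (k+1)) 0 + max (y k - real (k+1)) 0)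
        \<le> \<delta> * (2 * ?A + \<delta>)"
      using diff[of k] by (intro mult_mono) auto
    then show ?thesis
      using abs_theta_diff_le[of "y k - real (k+1)" "x k - real (k+1)"] by simp
  qed
  then show ?thesis
    using abs_suminf_weighted_diff_le[OF power_half_series, of
        "\<lambda>k. theta (y k - real (k+1))" "\<lambda>k. theta (x k - real (k+1))"]
      fex_summable[OF x] fex_summable[OF y]
    unfolding fex_def by simp
qed

lemma fex_continuous: "l2_continuous fex"
  unfolding l2_continuous_def
proof (intro ballI allI impI)
  fix x :: "nat \<Rightarrow> real" and e :: real
  assume x: "x \<in> l2" and e: "e > 0"
  define A where "A = l2_norm x"
  have A: "0 \<le> A"
    using abs_le_l2_norm[OF x, of 0] by (simp add: A_def)
  define d where "d = min 1 (e / (2 * A + 2))"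
  have "d \<le> e / (2 * A + 2)"
    by (simp add: d_def)
  then have d: "0 < d" "d \<le> 1" "d * (2 * A + 2) \<le> e"
    using e A by (simp_all add: d_def le_divide_eq)
  show "\<exists>d>0. \<forall>y\<in>l2. l2_norm (\<lambda>n. y n - x n) < d \<longrightarrow> \<bar>fex y - fex x\<bar> < e"
  proof (intro exI[of _ d] conjI ballI impI d(1))
    fix y assume y: "y \<in> l2" and close: "l2_norm (\<lambda>n. y n - x n) < d"
    define \<delta> where "\<delta> = l2_norm (\<lambda>n. y n - x n)"
    have "0 \<le> \<delta>"
      using abs_le_l2_norm[OF l2_linear_combination[OF y x, of 1 "-1"], of 0]
      by (simp add: \<delta>_def)
    have "\<bar>fex y - fex x\<bar> \<le> \<delta> * (2 * A + \<delta>)"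
      using abs_fex_diff_le[OF x y] unfolding A_def \<delta>_def .
    also have "\<dots> \<le> \<delta> * (2 * A + 1)"
      using \<open>0 \<le> \<delta>\<close> close d(2) by (intro mult_left_mono) (auto simp: \<delta>_def)
    also have "\<dots> \<le> d * (2 * A + 1)"
      using close A by (intro mult_right_mono) (auto simp: \<delta>_def)
    also have "\<dots> < d * (2 * A + 2)"
      using d(1) by simp
    finally show "\<bar>fex y - fex x\<bar> < e"
      using d(3) by linarith
  qed
qed

lemma fex_convex: "l2_convex fex"
  unfolding l2_convex_def
proof (intro ballI allI impI)
  fix x y :: "nat \<Rightarrow> real" and u :: real
  assume x: "x \<in> l2" and y: "y \<in> l2" and u: "0 \<le> u \<and> u \<le> 1"
  let ?z = "\<lambda>n. u * x n + (1 - u) * y n"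
  let ?t = "\<lambda>x k. (1/2::real) ^ (k+1) * theta (x k - real (k+1))"
  have "?t ?z k \<le> u * ?t x k + (1 - u) * ?t y k" for k
  proof -
    have "?z k - real (k+1) = u * (x k - real (k+1)) + (1 - u) * (y k - real (k+1))"
      by (simp add: algebra_simps)
    then have "theta (?z k - real (k+1))
        \<le> u * theta (x k - real (k+1)) + (1 - u) * theta (y k - real (k+1))"
      using u theta_convex by simp
    then have "?t ?z k
        \<le> (1/2) ^ (k+1) * (u * theta (x k - real (k+1)) + (1 - u) * theta (y k - real (k+1)))"
      by (rule mult_left_mono) simp
    also have "\<dots> = u * ?t x k + (1 - u) * ?t y k"
      by (simp only: distrib_left mult.left_commute)
    finally show ?thesis .
  qed
  moreover have sx: "summable (?t x)" and sy: "summable (?t y)" and "summable (?t ?z)"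
    using fex_summable l2_linear_combination x y by blast+
  ultimately have "(\<Sum>k. ?t ?z k) \<le> (\<Sum>k. u * ?t x k + (1 - u) * ?t y k)"
    by (intro suminf_le summable_add summable_mult)
  also have "\<dots> = (\<Sum>k. u * ?t x k) + (\<Sum>k. (1 - u) * ?t y k)"
    using sx sy by (intro suminf_add[symmetric] summable_mult)
  also have "\<dots> = u * (\<Sum>k. ?t x k) + (1 - u) * (\<Sum>k. ?t y k)"
    by (simp only: suminf_mult[OF sx] suminf_mult[OF sy])
  finally show "fex ?z \<le> u * fex x + (1 - u) * fex y"
    unfolding fex_def .
qed

lemma fex_not_constant_on_lines:
  assumes x: "x \<in> l2" and v: "v \<in> l2" and "v \<noteq> (\<lambda>n. 0)"
  shows "\<exists>t. fex (\<lambda>n. x n + t * v n) \<noteq> fex x"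
proof -
  obtain m where vm: "v m \<noteq> 0"
    using assms(3) by auto
  define s where "s = fex x * 2 ^ (m+1) + 1"
  have s: "1 \<le> s"
    using fex_nonneg[OF x] by (simp add: s_def)
  define t where "t = (real (m+1) - x m + s) / v m"
  have "x m + t * v m - real (m+1) = s"
    using vm by (simp add: t_def)
  then have theta_s: "theta (x m + t * v m - real (m+1)) = s\<^sup>2"
    using s by (simp add: theta_def)
  have "fex x * 2 ^ (m+1) < s"
    by (simp add: s_def)
  also have "s \<le> s\<^sup>2"
    using s mult_left_mono[of 1 s s] by (simp add: power2_eq_square)
  also have "\<dots> = theta (x m + t * v m - real (m+1))"
    using theta_s ..
  finally have "fex x < theta (x m + t * v m - real (m+1)) / 2 ^ (m+1)"
    by (simp add: pos_less_divide_eq)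
  also have "\<dots> = (1/2) ^ (m+1) * theta (x m + t * v m - real (m+1))"
    by (simp add: power_one_over)
  also have "\<dots> \<le> fex (\<lambda>n. x n + t * v n)"
    using fex_term_le[OF l2_linear_combination[OF x v, of 1 t]] by simp
  finally show ?thesis
    by (intro exI[of _ t]) simp
qed

lemma fex_fun_upd_flat:
  assumes "x k \<le> real (k+1)" "a \<le> real (k+1)"
  shows "fex (x(k := a)) = fex x"
  unfolding fex_def using assms by (intro suminf_cong) (simp add: theta_def)

lemma fex_no_strict_tilted_minimum:
  "\<not> (\<exists>\<xi>\<in>l2_dual. \<exists>x\<in>l2. \<forall>y\<in>l2. y \<noteq> x \<longrightarrow> fex y - \<xi> y > fex x - \<xi> x)"
proof
  assume "\<exists>\<xi>\<in>l2_dual. \<exists>x\<in>l2. \<forall>y\<in>l2. y \<noteq> x \<longrightarrow> fex y - \<xi> y > fex x - \<xi> x"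
  then obtain \<xi> x where \<xi>: "\<xi> \<in> l2_dual" and x: "x \<in> l2"
    and min: "\<And>y. y \<in> l2 \<Longrightarrow> y \<noteq> x \<Longrightarrow> fex y - \<xi> y > fex x - \<xi> x"
    by blast
  have "\<forall>\<^sub>F n in sequentially. x n < 1 \<and> 1 \<le> real n"
    using order_tendstoD(2)[OF l2_tendsto_zero[OF x] zero_less_one] eventually_ge_at_top[of 1]
    by eventually_elim auto
  then obtain k where "x k < 1" "1 \<le> real k"
    unfolding eventually_sequentially by blast
  then have k: "x k + 1 \<le> real (k+1)" "x k - 1 \<le> real (k+1)"
    by simp_all
  define y1 y2 where "y1 = x(k := x k + 1)" and "y2 = x(k := x k - 1)"
  have y: "y1 \<in> l2" "y2 \<in> l2"
    using x by (simp_all add: y1_def y2_def l2_fun_upd)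
  have "y1 k \<noteq> x k" "y2 k \<noteq> x k"
    by (simp_all add: y1_def y2_def)
  then have "y1 \<noteq> x" "y2 \<noteq> x"
    by auto
  moreover have "fex y1 = fex x" "fex y2 = fex x"
    using k unfolding y1_def y2_def by (simp_all add: fex_fun_upd_flat)
  ultimately have "\<xi> y1 < \<xi> x" "\<xi> y2 < \<xi> x"
    using min[OF y(1)] min[OF y(2)] by auto
  moreover have "\<xi> y1 + \<xi> y2 = 2 * \<xi> x"
    by (rule l2_dual_midpoint[OF \<xi> x y]) (auto simp: y1_def y2_def)
  ultimately show False
    by simp
qed

theorem mainTheorem10:
  shows "l2_continuous fex \<and> l2_convex fex
    \<and> (\<forall>x\<in>l2. \<forall>v\<in>l2. v \<noteq> (\<lambda>n. 0) \<longrightarrow> (\<exists>t::real. fex (\<lambda>n. x n + t * v n) \<noteq> fex x))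
    \<and> \<not> (\<exists>\<xi>\<in>l2_dual. \<exists>x\<in>l2. \<forall>y\<in>l2. y \<noteq> x \<longrightarrow> fex y - \<xi> y > fex x - \<xi> x)"
  using fex_continuous fex_convex fex_not_constant_on_lines fex_no_strict_tilted_minimum
  by blast

end
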